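(* For every $s\in S$ and $u\in W$ one has in $Z$ \[ c(u^{-1}s)=\sum_{w\in W}{}^uY_{I_w}(s)\,\zeta(u)^\vee_{I_w},\qquad\text{where } {}^uY_{I_w}=uY_{I_w}u^{-1}. \]
   Context: Setting: $\Phi$ a finite real root system (simple roots $\Pi$, positive roots $\Phi_+$, negative roots $\Phi_-$, Coxeter group $W$), $\mathcal O$ its coefficient ring, $\Lambda$ a free $\mathcal O$-module with root lattice $\subset\Lambda\subset$ weight lattice; $F$ a one-dimensional commutative formal group law over a commutative ring $R$; $S$ the formal group ring ($R[[x_\lambda]]_{\lambda\in\Lambda}$ modulo the closure of $x_0=0$, $x_{\lambda+\mu}=F(x_\lambda,x_\mu)$; no completion if $F$ polynomial; in the non-crystallographic case $F$ additive, $R=\mathcal O$, $S=\mathrm{Sym}_{\mathcal O}\Lambda$), with $W$ acting by $w(x_\lambda)=x_{w(\lambda)}$. Assume all $x_\alpha$ regular and that for distinct positive roots $\alpha,\alpha'$, $x_\alpha\mid x_{\alpha'}f\Rightarrow x_\alpha\mid f$. $Q=S[1/x_\alpha]$, $Q_W$ the twisted group algebra (basis $\delta_w$, $\delta_wq=w(q)\delta_w$), acting on $Q$ by $q\delta_w(f)=q\,w(f)$. $Y_\alpha=\frac1{x_{-\alpha}}+\frac1{x_\alpha}\delta_{s_\alpha}$ (so $Y_\alpha(f)=\frac f{x_{-\alpha}}+\frac{s_\alpha(f)}{x_\alpha}$), $Y_i=Y_{\alpha_i}$. Fixed reduced words $I_w$, $Y_{I_w}=Y_{i_1}\cdots Y_{i_l}$,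 $I_w^{-1}$ reversed word. ${}^uY_{I_w}(s)$ means $u\big(Y_{I_w}(u^{-1}(s))\big)$. $\mathbb D$ = $R$-subalgebra of $Q_W$ generated by $S$ and the $Y_i$ (free left $S$-module on $\{Y_{I_w}\}$). $Z=\{(z_v)_{v\in W}\in\bigoplus_vS: z_{s_\alpha w}-z_w\in x_\alpha S\}$, identified with $\mathrm{Hom}_S(\mathbb D,S)$ via $\phi\mapsto(\phi(\delta_v))_v$. Hecke action $q\delta_w\bullet(z_v)_v=(v(q)z_{vw})_v$; Weyl action $q\delta_w\odot(z_v)_v=(q\,w(z_{w^{-1}v}))_v$. Characteristic map $c\colon S\to Z$, $c(f)=(v(f))_v$. $x_\Pi=\prod_{\alpha\in\Phi_-}x_\alpha$, $[e]$ with $e$-coordinate $x_\Pi$ and others $0$, $[v]=\delta_v\odot[e]$, $\zeta(v)_{I_w}=Y_{I_w^{-1}}\bullet[v]$, $\zeta_{I_w}=\zeta(e)_{I_w}$. $\zeta^\vee_{I_w}\in Z$ corresponds to the functional on $\mathbb D$ with $Y_{I_u}\mapsto\delta^{Kr}_{w,u}$, and $\zeta(u)^\vee_{I_w}:=\delta_u\odot\zeta^\vee_{I_w}$ (these form an $S$-basis of $Z$ dual to $\{\zeta(u)_{I_w}\}$ under $(z,z')\mapsto\pi\bullet(zz')$, where $\pi=\sum_w\frac1{w(x_\Pi)}\delta_w$). *)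

theory Defs
  imports "HOL-Analysis.Analysis"
begin

definition reflection :: "'v::real_inner \<Rightarrow> 'v \<Rightarrow> 'v" where
  "reflection a v = v - ((2 * (v \<bullet> a)) / (a \<bullet> a)) *\<^sub>R a"

definition root_system :: "'v::euclidean_space set \<Rightarrow> bool" where
  "root_system Phi \<longleftrightarrow> finite Phi \<and> 0 \<notin> Phi \<and>
     (\<forall>a\<in>Phi. \<forall>b\<in>Phi. reflection a b \<in> Phi) \<and>
     (\<forall>a\<in>Phi. \<forall>c::real. c *\<^sub>R a \<in> Phi \<longrightarrow> c = 1 \<or> c = -1)"

definition nonneg_comb :: "'v::euclidean_space list \<Rightarrow> 'v \<Rightarrow> bool" where
  "nonneg_comb Pis b \<longleftrightarrow>
     (\<exists>c::nat \<Rightarrow> real. (\<forall>i<length Pis. c i \<ge> 0) \<and> b = (\<Sum>i<length Pis. c i *\<^sub>R (Pis ! i)))"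

text \<open>Simple roots, listed as alpha_1, ..., alpha_n (index i stands for alpha_i = Pis ! i).\<close>
definition simple_system :: "'v::euclidean_space set \<Rightarrow> 'v list \<Rightarrow> bool" where
  "simple_system Phi Pis \<longleftrightarrow> distinct Pis \<and> set Pis \<subseteq> Phi \<and> independent (set Pis) \<and>
     (\<forall>b\<in>Phi. nonneg_comb Pis b \<or> nonneg_comb Pis (- b))"

definition pos_roots :: "'v::euclidean_space set \<Rightarrow> 'v list \<Rightarrow> 'v set" where
  "pos_roots Phi Pis = {b\<in>Phi. nonneg_comb Pis b}"

definition neg_roots :: "'v::euclidean_space set \<Rightarrow> 'v list \<Rightarrow> 'v set" where
  "neg_roots Phi Pis = {b\<in>Phi. nonneg_comb Pis (- b)}"

inductive_set weyl_group :: "'v::real_inner set \<Rightarrow> ('v \<Rightarrow> 'v) set" for Phi where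
  weyl_id: "id \<in> weyl_group Phi"
| weyl_step: "a \<in> Phi \<Longrightarrow> w \<in> weyl_group Phi \<Longrightarrow> reflection a \<circ> w \<in> weyl_group Phi"

definition word_prod :: "'v::real_inner list \<Rightarrow> nat list \<Rightarrow> 'v \<Rightarrow> 'v" where
  "word_prod Pis is = foldr (\<lambda>i w. reflection (Pis ! i) \<circ> w) is id"

definition reduced_word :: "'v::real_inner list \<Rightarrow> ('v \<Rightarrow> 'v) \<Rightarrow> nat list \<Rightarrow> bool" where
  "reduced_word Pis w is \<longleftrightarrow> (\<forall>i\<in>set is. i < length Pis) \<and> word_prod Pis is = w \<and>
     (\<forall>js. (\<forall>j\<in>set js. j < length Pis) \<and> word_prod Pis js = w \<longrightarrow> length is \<le> length js)"

text \<open>Inverse in the commutative ring Q (used only for units).\<close>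
definition rinv :: "'q::comm_ring_1 \<Rightarrow> 'q" where
  "rinv y = (THE z. y * z = 1)"

definition setting ::
  "'v::euclidean_space set \<Rightarrow> 'v list \<Rightarrow> 'q::comm_ring_1 set \<Rightarrow>
   (('v \<Rightarrow> 'v) \<Rightarrow> 'q \<Rightarrow> 'q) \<Rightarrow> ('v \<Rightarrow> 'q) \<Rightarrow> bool" where
  "setting Phi Pis S act x \<longleftrightarrow>
     root_system Phi \<and> simple_system Phi Pis \<and>
     \<comment> \<open>S is a subring of Q\<close>
     0 \<in> S \<and> 1 \<in> S \<and> (\<forall>f\<in>S. \<forall>g\<in>S. f + g \<in> S \<and> f - g \<in> S \<and> f * g \<in> S) \<and>
     \<comment> \<open>the x_alpha lie in S and are inverted in Q\<close>
     (\<forall>a\<in>Phi. x a \<in> S \<and> (\<exists>y. x a * y = 1)) \<and>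
     \<comment> \<open>Q = S[1/x_alpha]\<close>
     (\<forall>q. \<exists>f\<in>S. \<exists>k::nat. q * (\<Prod>a\<in>neg_roots Phi Pis. x a) ^ k = f) \<and>
     \<comment> \<open>divisibility hypothesis for distinct positive roots\<close>
     (\<forall>a\<in>pos_roots Phi Pis. \<forall>a'\<in>pos_roots Phi Pis. \<forall>f\<in>S. a \<noteq> a' \<longrightarrow>
        (\<exists>g\<in>S. x a' * f = x a * g) \<longrightarrow> (\<exists>g\<in>S. f = x a * g)) \<and>
     \<comment> \<open>W acts on Q by ring automorphisms, preserving S, with w(x_alpha) = x_{w(alpha)}\<close>
     (\<forall>q. act id q = q) \<and>
     (\<forall>w1\<in>weyl_group Phi. \<forall>w2\<in>weyl_group Phi. \<forall>q. act (w1 \<circ> w2) q = act w1 (act w2 q)) \<and>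
     (\<forall>w\<in>weyl_group Phi. act w 1 = 1 \<and>
        (\<forall>p q. act w (p + q) = act w p + act w q \<and> act w (p * q) = act w p * act w q) \<and>
        act w ` S \<subseteq> S \<and> (\<forall>a\<in>Phi. act w (x a) = x (w a)))"

text \<open>An element sum_w q_w delta_w of Q_W is represented by its coefficient function w |-> q_w
  (zero outside W).\<close>

definition tw_mult :: "('v::real_inner \<Rightarrow> 'v) set \<Rightarrow> (('v \<Rightarrow> 'v) \<Rightarrow> 'q::comm_ring_1 \<Rightarrow> 'q) \<Rightarrow>
    (('v \<Rightarrow> 'v) \<Rightarrow> 'q) \<Rightarrow> (('v \<Rightarrow> 'v) \<Rightarrow> 'q) \<Rightarrow> (('v \<Rightarrow> 'v) \<Rightarrow> 'q)" where
  "tw_mult W act p r = (\<lambda>y. if y \<in> W then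
      (\<Sum>a\<in>W. \<Sum>b\<in>W. if a \<circ> b = y then p a * act a (r b) else 0) else 0)"

definition tw_delta :: "('v \<Rightarrow> 'v) \<Rightarrow> (('v \<Rightarrow> 'v) \<Rightarrow> 'q::comm_ring_1)" where
  "tw_delta w = (\<lambda>y. if y = w then 1 else 0)"

definition Yalpha :: "('v \<Rightarrow> 'q::comm_ring_1) \<Rightarrow> 'v::real_inner \<Rightarrow> (('v \<Rightarrow> 'v) \<Rightarrow> 'q)" where
  "Yalpha x a = (\<lambda>y. (if y = id then rinv (x (- a)) else 0)
                    + (if y = reflection a then rinv (x a) else 0))"

definition Yword :: "'v::real_inner set \<Rightarrow> 'v list \<Rightarrow> (('v \<Rightarrow> 'v) \<Rightarrow> 'q::comm_ring_1 \<Rightarrow> 'q) \<Rightarrow>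
    ('v \<Rightarrow> 'q) \<Rightarrow> nat list \<Rightarrow> (('v \<Rightarrow> 'v) \<Rightarrow> 'q)" where
  "Yword Phi Pis act x is =
     foldr (\<lambda>i p. tw_mult (weyl_group Phi) act (Yalpha x (Pis ! i)) p) is (tw_delta id)"

definition tw_apply :: "('v::real_inner \<Rightarrow> 'v) set \<Rightarrow> (('v \<Rightarrow> 'v) \<Rightarrow> 'q::comm_ring_1 \<Rightarrow> 'q) \<Rightarrow>
    (('v \<Rightarrow> 'v) \<Rightarrow> 'q) \<Rightarrow> 'q \<Rightarrow> 'q" where
  "tw_apply W act p f = (\<Sum>w\<in>W. p w * act w f)"

text \<open>Elements z = (z_v)_v of Z correspond to functionals on D (extended Q-linearly to Q_W)
  via phi(delta_v) = z_v, i.e. phi(sum_v q_v delta_v) = sum_v q_v z_v.\<close>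
definition pairing :: "('v::real_inner \<Rightarrow> 'v) set \<Rightarrow> (('v \<Rightarrow> 'v) \<Rightarrow> 'q::comm_ring_1) \<Rightarrow>
    (('v \<Rightarrow> 'v) \<Rightarrow> 'q) \<Rightarrow> 'q" where
  "pairing W z p = (\<Sum>v\<in>W. p v * z v)"

definition zeta_dual :: "'v::real_inner set \<Rightarrow> 'v list \<Rightarrow> (('v \<Rightarrow> 'v) \<Rightarrow> 'q::comm_ring_1 \<Rightarrow> 'q) \<Rightarrow>
    ('v \<Rightarrow> 'q) \<Rightarrow> (('v \<Rightarrow> 'v) \<Rightarrow> nat list) \<Rightarrow> ('v \<Rightarrow> 'v) \<Rightarrow> (('v \<Rightarrow> 'v) \<Rightarrow> 'q)" where
  "zeta_dual Phi Pis act x I w = (THE z. (\<forall>v. v \<notin> weyl_group Phi \<longrightarrow> z v = 0) \<and>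
      (\<forall>u\<in>weyl_group Phi. pairing (weyl_group Phi) z (Yword Phi Pis act x (I u))
                            = (if u = w then 1 else 0)))"

definition weyl_dot :: "('v::real_inner \<Rightarrow> 'v) set \<Rightarrow> (('v \<Rightarrow> 'v) \<Rightarrow> 'q::comm_ring_1 \<Rightarrow> 'q) \<Rightarrow>
    ('v \<Rightarrow> 'v) \<Rightarrow> (('v \<Rightarrow> 'v) \<Rightarrow> 'q) \<Rightarrow> (('v \<Rightarrow> 'v) \<Rightarrow> 'q)" where
  "weyl_dot W act u z = (\<lambda>v. if v \<in> W then act u (z (inv u \<circ> v)) else 0)"

definition zeta_dual_u :: "'v::real_inner set \<Rightarrow> 'v list \<Rightarrow> (('v \<Rightarrow> 'v) \<Rightarrow> 'q::comm_ring_1 \<Rightarrow> 'q) \<Rightarrow>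
    ('v \<Rightarrow> 'q) \<Rightarrow> (('v \<Rightarrow> 'v) \<Rightarrow> nat list) \<Rightarrow> ('v \<Rightarrow> 'v) \<Rightarrow> ('v \<Rightarrow> 'v) \<Rightarrow> (('v \<Rightarrow> 'v) \<Rightarrow> 'q)" where
  "zeta_dual_u Phi Pis act x I u w = weyl_dot (weyl_group Phi) act u (zeta_dual Phi Pis act x I w)"

definition charmap :: "('v::real_inner \<Rightarrow> 'v) set \<Rightarrow> (('v \<Rightarrow> 'v) \<Rightarrow> 'q::comm_ring_1 \<Rightarrow> 'q) \<Rightarrow>
    'q \<Rightarrow> (('v \<Rightarrow> 'v) \<Rightarrow> 'q)" where
  "charmap W act f = (\<lambda>v. if v \<in> W then act v f else 0)"

definition conjY :: "'v::real_inner set \<Rightarrow> 'v list \<Rightarrow> (('v \<Rightarrow> 'v) \<Rightarrow> 'q::comm_ring_1 \<Rightarrow> 'q) \<Rightarrow>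
    ('v \<Rightarrow> 'q) \<Rightarrow> (('v \<Rightarrow> 'v) \<Rightarrow> nat list) \<Rightarrow> ('v \<Rightarrow> 'v) \<Rightarrow> ('v \<Rightarrow> 'v) \<Rightarrow> 'q \<Rightarrow> 'q" where
  "conjY Phi Pis act x I u w s =
     act u (tw_apply (weyl_group Phi) act (Yword Phi Pis act x (I w)) (act (inv u) s))"

end

(* Since Y_alpha = 1/x_(-alpha) + 1/x_alpha delta_(s_alpha), induction on the word shows that
   Y_(I_w) = c delta_w + (terms delta_v with l(v) < l(w)) with c a unit.  So the coefficient matrix
   (Y_(I_w))_v is unitriangular for word length, hence invertible over any commutative ring: the
   zeta^vee_(I_w) exist, and their coefficients form a two-sided inverse of it.  Writing
   Y_(I_w)(f) = sum_y (Y_(I_w))_y y(f), the column identity sum_w (Y_(I_w))_y zeta^vee_(I_w)(v) = [y = v]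
   gives v(f) = sum_w Y_(I_w)(f) zeta^vee_(I_w)(v), i.e. the case u = e.  The general case is this
   one at the coordinate u^-1 v for f = u^-1(s), with u applied to both sides. *)

theory Submission
  imports Defs
begin

lemma reflection_reflection:
  fixes a :: "'v::real_inner"
  assumes "a \<noteq> 0"
  shows "reflection a (reflection a v) = v"
proof -
  have "reflection a v \<bullet> a = - (v \<bullet> a)"
    using assms by (simp add: reflection_def inner_diff_left field_simps)
  then show ?thesis
    using assms by (simp add: reflection_def)
qed

lemma reflection_comp_self:
  fixes a :: "'v::real_inner"
  assumes "a \<noteq> 0"
  shows "reflection a \<circ> reflection a = id"
  using reflection_reflection[OF assms] by (auto simp: fun_eq_iff)

lemma inv_reflection:
  fixes a :: "'v::real_inner"
  assumes "a \<noteq> 0"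
  shows "inv (reflection a) = reflection a"
  by (rule inv_unique_comp) (simp_all add: reflection_comp_self assms)

lemma linear_reflection: "linear (reflection (a::'v::real_inner))"
  by (rule linearI) (simp_all add: reflection_def inner_add_left algebra_simps add_divide_distrib)

lemma weyl_group_comp:
  "w1 \<in> weyl_group Phi \<Longrightarrow> w2 \<in> weyl_group Phi \<Longrightarrow> w1 \<circ> w2 \<in> weyl_group Phi"
  by (induction w1 rule: weyl_group.induct) (auto simp: o_assoc[symmetric] intro: weyl_group.intros)

lemma reflection_in_weyl_group: "a \<in> Phi \<Longrightarrow> reflection a \<in> weyl_group Phi"
  using weyl_group.weyl_step[OF _ weyl_group.weyl_id, of a Phi] by simp

lemma bij_weyl_group:
  assumes "0 \<notin> Phi" "w \<in> weyl_group Phi"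
  shows "bij w"
  using assms(2)
proof (induction w rule: weyl_group.induct)
  case weyl_id
  show ?case by (rule bij_id)
next
  case (weyl_step a w)
  then have "a \<noteq> 0" using assms(1) by auto
  then have "bij (reflection a)"
    using o_bij[OF reflection_comp_self reflection_comp_self] by blast
  then show ?case using bij_comp[OF weyl_step.IH] by blast
qed

lemma inv_in_weyl_group:
  assumes "0 \<notin> Phi" "w \<in> weyl_group Phi"
  shows "inv w \<in> weyl_group Phi"
  using assms(2)
proof (induction w rule: weyl_group.induct)
  case weyl_id
  show ?case by (metis inv_id weyl_group.weyl_id)
next
  case (weyl_step a w)
  have "a \<noteq> 0" using weyl_step assms(1) by auto
  then have "inv (reflection a \<circ> w) = inv w \<circ> reflection a"
    using o_inv_distrib bij_weyl_group[OF assms(1)] reflection_in_weyl_group inv_reflection weyl_step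
    by metis
  then show ?case
    using weyl_group_comp[OF weyl_step.IH reflection_in_weyl_group[OF weyl_step.hyps(1)]] by metis
qed

lemma linear_weyl_group: "w \<in> weyl_group Phi \<Longrightarrow> linear w"
  by (induction w rule: weyl_group.induct) (use linear_id linear_compose linear_reflection in blast)+

lemma weyl_group_image_roots:
  assumes "root_system Phi" "w \<in> weyl_group Phi"
  shows "w ` Phi \<subseteq> Phi"
  using assms(2)
proof induction
  case (weyl_step a w)
  then show ?case
    using assms(1) unfolding root_system_def by auto
qed simp

lemma weyl_group_fixes_orthogonal:
  assumes "w \<in> weyl_group Phi" "\<forall>a\<in>Phi. v \<bullet> a = 0"
  shows "w v = v"
  using assms by induction (auto simp: reflection_def)

lemma finite_weyl_group:
  assumes "root_system Phi"
  shows "finite (weyl_group Phi)"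
proof -
  have "inj_on (\<lambda>w. restrict w Phi) (weyl_group Phi)"
  proof (rule inj_onI)
    fix w1 w2 assume w1: "w1 \<in> weyl_group Phi" and w2: "w2 \<in> weyl_group Phi"
      and "restrict w1 Phi = restrict w2 Phi"
    then have agree: "\<And>b. b \<in> Phi \<Longrightarrow> w1 b = w2 b" by (metis restrict_apply')
    show "w1 = w2"
    proof
      fix v
      obtain y z where y: "y \<in> span Phi" and z: "\<And>w. w \<in> span Phi \<Longrightarrow> orthogonal z w"
        and v: "v = y + z"
        using orthogonal_subspace_decomp_exists by blast
      have "w1 y = w2 y"
        using linear_eq_on_span[of w1 w2 Phi y] linear_weyl_group w1 w2 agree y by blast
      moreover have "\<forall>a\<in>Phi. z \<bullet> a = 0"
        using z span_base orthogonal_def by blast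
      ultimately show "w1 v = w2 v"
        using v w1 w2 weyl_group_fixes_orthogonal linear_weyl_group linear_add by metis
    qed
  qed
  moreover have "(\<lambda>w. restrict w Phi) ` weyl_group Phi \<subseteq> Phi \<rightarrow>\<^sub>E Phi"
    using weyl_group_image_roots[OF assms] by (fastforce simp: restrict_PiE_iff)
  moreover have "finite (Phi \<rightarrow>\<^sub>E Phi)"
    using assms by (simp add: root_system_def finite_PiE)
  ultimately show ?thesis
    by (metis finite_imageD finite_subset)
qed

definition unitriangular :: "'w set \<Rightarrow> ('w \<Rightarrow> nat) \<Rightarrow> ('w \<Rightarrow> 'w \<Rightarrow> 'q::comm_ring_1) \<Rightarrow> bool" where
  "unitriangular W l M \<longleftrightarrow>
     (\<forall>u\<in>W. M u u dvd 1 \<and> (\<forall>v\<in>W. M u v \<noteq> 0 \<longrightarrow> v = u \<or> l v < l u))"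

lemma unitriangular_lower:
  "unitriangular W l M \<Longrightarrow> u \<in> W \<Longrightarrow> v \<in> W \<Longrightarrow> v \<noteq> u \<Longrightarrow> l v \<ge> l u \<Longrightarrow> M u v = 0"
  unfolding unitriangular_def by force

lemma unitriangular_row_split:
  assumes "finite W" "unitriangular W l M" "u \<in> W"
    and "\<And>v. v \<in> W \<Longrightarrow> l v < l u \<Longrightarrow> z v = z' v"
  shows "(\<Sum>v\<in>W. M u v * z v) = M u u * z u + (\<Sum>v\<in>W. M u v * z' v) - M u u * z' u"
proof -
  have "(\<Sum>v\<in>W - {u}. M u v * z v) = (\<Sum>v\<in>W - {u}. M u v * z' v)"
    using assms(4) unitriangular_lower[OF assms(2,3)]
    by (intro sum.cong refl) (metis DiffE singletonI not_less mult_zero_left)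
  then show ?thesis
    using assms(1,3) by (simp add: sum.remove)
qed

lemma unitriangular_kernel:
  assumes "finite W" "unitriangular W l M"
    and "\<forall>u\<in>W. (\<Sum>v\<in>W. M u v * z v) = 0" "v \<in> W"
  shows "z v = 0"
  using assms(4)
proof (induction "l v" arbitrary: v rule: less_induct)
  case (less u)
  then have "M u u * z u = 0"
    using assms(3) unitriangular_row_split[OF assms(1,2) less.prems, of z "\<lambda>_. 0"] by simp
  moreover obtain c where "1 = M u u * c"
    using assms(2) less.prems unfolding unitriangular_def by blast
  ultimately show ?case
    by (metis mult.left_commute mult_1_right mult_zero_right)
qed

lemma unitriangular_solvable:
  assumes "finite W" "unitriangular W l M"
  shows "\<exists>z. \<forall>u\<in>W. (\<Sum>v\<in>W. M u v * z v) = t u"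
proof -
  obtain c where c: "\<And>u. u \<in> W \<Longrightarrow> M u u * c u = 1"
    using assms(2) unfolding unitriangular_def dvd_def by (metis (full_types) bchoice)
  have "\<exists>z. \<forall>u\<in>W. l u < k \<longrightarrow> (\<Sum>v\<in>W. M u v * z v) = t u" for k
  proof (induction k)
    case (Suc k)
    then obtain z where z: "\<forall>u\<in>W. l u < k \<longrightarrow> (\<Sum>v\<in>W. M u v * z v) = t u"
      by blast
    \<comment> \<open>a row of length k sees no other entry of length k than its diagonal one\<close>
    define z' where
      "z' v = (if l v = k then z v + c v * (t v - (\<Sum>v'\<in>W. M v v' * z v')) else z v)" for v
    have "(\<Sum>v\<in>W. M u v * z' v) = t u" if "u \<in> W" "l u < Suc k" for u
    proof -
      have split: "(\<Sum>v\<in>W. M u v * z' v) = M u u * z' u + (\<Sum>v\<in>W. M u v * z v) - M u u * z u"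
        using that(2) by (intro unitriangular_row_split[OF assms that(1)]) (simp add: z'_def)
      show ?thesis
      proof (cases "l u = k")
        case True
        then have "M u u * z' u = M u u * z u + (t u - (\<Sum>v\<in>W. M u v * z v))"
          using c[OF that(1)] by (simp add: z'_def distrib_left mult.assoc[symmetric])
        then show ?thesis
          using split by simp
      next
        case False
        then show ?thesis
          using split z that by (simp add: z'_def)
      qed
    qed
    then show ?case by blast
  qed simp
  then obtain z where "\<forall>u\<in>W. l u < Suc (Max (l ` W)) \<longrightarrow> (\<Sum>v\<in>W. M u v * z v) = t u"
    by blast
  then show ?thesis
    using assms(1) by (auto simp: le_imp_less_Suc)
qed

lemma unitriangular_THE_solution:
  assumes "finite W" "unitriangular W l M" "u \<in> W"
  shows "(\<Sum>v\<in>W. M u v * (THE z. (\<forall>v. v \<notin> W \<longrightarrow> z v = 0) \<and>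
                                  (\<forall>u\<in>W. (\<Sum>v\<in>W. M u v * z v) = t u)) v) = t u"
proof -
  let ?P = "\<lambda>z. (\<forall>v. v \<notin> W \<longrightarrow> z v = 0) \<and> (\<forall>u\<in>W. (\<Sum>v\<in>W. M u v * z v) = t u)"
  obtain z where z: "\<forall>u\<in>W. (\<Sum>v\<in>W. M u v * z v) = t u"
    using unitriangular_solvable[OF assms(1,2)] by blast
  have sol: "?P (\<lambda>v. if v \<in> W then z v else 0)"
    using z by simp
  have uniq: "z1 = z2" if "?P z1" "?P z2" for z1 z2
  proof
    fix v
    have "\<forall>u\<in>W. (\<Sum>v\<in>W. M u v * (z1 v - z2 v)) = 0"
      using that by (simp add: right_diff_distrib sum_subtractf)
    then show "z1 v = z2 v"
      using that unitriangular_kernel[OF assms(1,2), of "\<lambda>v. z1 v - z2 v" v] by (cases "v \<in> W") auto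
  qed
  have "?P (THE z. ?P z)"
    by (rule theI[where P = ?P, OF sol uniq[OF _ sol]])
  then show ?thesis
    using assms(3) by blast
qed

lemma unitriangular_left_inverse:
  assumes "finite W" "unitriangular W l M"
    and right_inverse: "\<forall>w\<in>W. \<forall>u\<in>W. (\<Sum>v\<in>W. M u v * Z w v) = (if u = w then 1 else 0)"
    and "y \<in> W" "v \<in> W"
  shows "(\<Sum>w\<in>W. M w y * Z w v) = (if v = y then 1 else 0)"
proof -
  \<comment> \<open>M kills this column of Z^T M - 1, since M Z^T M - M = 0\<close>
  define z where "z v = (\<Sum>w\<in>W. M w y * Z w v) - (if v = y then 1 else 0)" for v
  have "(\<Sum>v\<in>W. M u v * z v) = 0" if "u \<in> W" for u
  proof -
    have "(\<Sum>v\<in>W. M u v * (\<Sum>w\<in>W. M w y * Z w v)) = (\<Sum>w\<in>W. M w y * (\<Sum>v\<in>W. M u v * Z w v))"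
      unfolding sum_distrib_left by (subst sum.swap) (simp add: mult.left_commute)
    also have "\<dots> = (\<Sum>w\<in>W. if w = u then M u y else 0)"
      using right_inverse that by (intro sum.cong) auto
    also have "\<dots> = M u y"
      using assms(1) that by simp
    finally have "(\<Sum>v\<in>W. M u v * (\<Sum>w\<in>W. M w y * Z w v)) = M u y" .
    moreover have "(\<Sum>v\<in>W. M u v * (if v = y then 1 else 0)) = M u y"
      using assms(1,4) by (simp add: if_distrib[of "(*) _"] cong: if_cong)
    ultimately show ?thesis
      by (simp add: z_def right_diff_distrib sum_subtractf)
  qed
  then show ?thesis
    using unitriangular_kernel[OF assms(1,2), of z v] assms(5) by (simp add: z_def)
qed

lemma rinv_right_inverse:
  fixes a :: "'q::comm_ring_1"
  assumes "a * b = 1"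
  shows "a * rinv a = 1"
proof -
  have "(THE z. a * z = 1) = b"
  proof (rule the_equality)
    show "z = b" if "a * z = 1" for z
      using assms that by (metis mult.left_commute mult_1_right)
  qed (rule assms)
  then show ?thesis
    using assms by (simp add: rinv_def)
qed

definition word_length_less :: "'v::real_inner list \<Rightarrow> ('v \<Rightarrow> 'v) \<Rightarrow> nat \<Rightarrow> bool" where
  "word_length_less Pis w n \<longleftrightarrow>
     (\<exists>js. (\<forall>j\<in>set js. j < length Pis) \<and> length js < n \<and> word_prod Pis js = w)"

lemma word_prod_Nil: "word_prod Pis [] = id"
  by (simp add: word_prod_def id_def)

lemma word_prod_Cons: "word_prod Pis (i # is) = reflection (Pis ! i) \<circ> word_prod Pis is"
  by (simp add: word_prod_def)

lemma word_prod_in_weyl_group: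
  assumes "set Pis \<subseteq> Phi"
  shows "\<forall>i\<in>set is. i < length Pis \<Longrightarrow> word_prod Pis is \<in> weyl_group Phi"
proof (induction "is")
  case Nil
  show ?case
    unfolding word_prod_Nil by (rule weyl_group.weyl_id)
next
  case (Cons i "is")
  then have "Pis ! i \<in> Phi"
    using assms by auto
  then show ?case
    unfolding word_prod_Cons by (rule weyl_group.weyl_step) (use Cons in auto)
qed

lemma word_length_less_reflection:
  assumes "i < length Pis" "Pis ! i \<noteq> 0" "word_length_less Pis (reflection (Pis ! i) \<circ> w) n"
  shows "word_length_less Pis w (Suc n)"
proof -
  obtain js where js: "\<forall>j\<in>set js. j < length Pis" "length js < n"
    "word_prod Pis js = reflection (Pis ! i) \<circ> w"
    using assms(3) by (auto simp: word_length_less_def)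
  then have "word_prod Pis (i # js) = w"
    using reflection_reflection[OF assms(2)] by (simp add: word_prod_Cons fun_eq_iff)
  then show ?thesis
    using js assms(1) unfolding word_length_less_def by (intro exI[of _ "i # js"]) simp
qed

lemma reduced_word_length_less_iff:
  assumes "reduced_word Pis w is"
  shows "word_length_less Pis w n \<longleftrightarrow> length is < n"
  using assms unfolding reduced_word_def word_length_less_def by (auto intro: le_less_trans)

locale weyl_setting =
  fixes Phi :: "'v::euclidean_space set" and Pis :: "'v list" and S :: "'q::comm_ring_1 set"
    and act :: "('v \<Rightarrow> 'v) \<Rightarrow> 'q \<Rightarrow> 'q" and x :: "'v \<Rightarrow> 'q"
  assumes setting: "setting Phi Pis S act x"
begin

abbreviation W :: "('v \<Rightarrow> 'v) set" where
  "W \<equiv> weyl_group Phi"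

lemma root_system: "root_system Phi"
  using setting by (simp add: setting_def)

lemma zero_notin_roots: "0 \<notin> Phi"
  using root_system by (simp add: root_system_def)

lemma simple_roots_subset: "set Pis \<subseteq> Phi"
  using setting by (simp add: setting_def simple_system_def)

lemma x_invertible: "a \<in> Phi \<Longrightarrow> x a * rinv (x a) = 1"
  using setting rinv_right_inverse unfolding setting_def by metis

lemma act_id: "act id q = q"
  using setting by (simp add: setting_def)

lemma act_comp: "w1 \<in> W \<Longrightarrow> w2 \<in> W \<Longrightarrow> act (w1 \<circ> w2) q = act w1 (act w2 q)"
  using setting by (simp add: setting_def)

lemma
  assumes "w \<in> W"
  shows act_one: "act w 1 = 1"
    and act_add: "act w (p + q) = act w p + act w q"
    and act_mult: "act w (p * q) = act w p * act w q"
  using setting assms by (simp_all add: setting_def)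

lemma finite_W: "finite W"
  using finite_weyl_group[OF root_system] .

lemma act_zero:
  assumes "w \<in> W"
  shows "act w 0 = 0"
proof -
  have "act w 0 + act w 0 = act w 0 + 0"
    by (metis act_add[OF assms] add_0_right)
  then show ?thesis
    by (rule add_left_imp_eq)
qed

lemma act_sum: "w \<in> W \<Longrightarrow> act w (\<Sum>y\<in>A. f y) = (\<Sum>y\<in>A. act w (f y))"
  by (induction A rule: infinite_finite_induct) (simp_all add: act_zero act_add)

lemma act_unit:
  assumes "w \<in> W" "c dvd 1"
  shows "act w c dvd 1"
proof -
  obtain k where "1 = c * k"
    using assms(2) by (rule dvdE)
  then have "1 = act w c * act w k"
    using act_one[OF assms(1)] act_mult[OF assms(1)] by metis
  then show ?thesis
    by (rule dvdI)
qed

lemma tw_mult_apply: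
  assumes "y \<in> W"
  shows "tw_mult W act p r y = (\<Sum>a\<in>W. p a * act a (r (inv a \<circ> y)))"
proof -
  have "(\<Sum>b\<in>W. if a \<circ> b = y then p a * act a (r b) else 0) = p a * act a (r (inv a \<circ> y))"
    if a: "a \<in> W" for a
  proof -
    have "bij a"
      using bij_weyl_group[OF zero_notin_roots a] .
    then have "a \<circ> b = y \<longleftrightarrow> b = inv a \<circ> y" for b
      by (simp add: fun_eq_iff bij_inv_eq_iff)
    moreover have "inv a \<circ> y \<in> W"
      using weyl_group_comp[OF inv_in_weyl_group[OF zero_notin_roots a] assms] .
    ultimately show ?thesis
      using finite_W by (simp add: sum.delta)
  qed
  then show ?thesis
    using assms by (simp add: tw_mult_def)
qed

lemma tw_mult_Yalpha_apply:
  assumes "a \<in> Phi" "y \<in> W"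
  shows "tw_mult W act (Yalpha x a) r y
           = rinv (x (- a)) * r y + rinv (x a) * act (reflection a) (r (reflection a \<circ> y))"
proof -
  let ?s = "reflection a"
  have "a \<noteq> 0"
    using assms(1) zero_notin_roots by blast
  then have "Yalpha x a b * act b (r (inv b \<circ> y))
      = (if b = id then rinv (x (- a)) * r y else 0)
        + (if b = ?s then rinv (x a) * act ?s (r (?s \<circ> y)) else 0)" for b
    by (simp add: Yalpha_def distrib_right inv_reflection act_id)
  then show ?thesis
    using reflection_in_weyl_group[OF assms(1)] weyl_group.weyl_id[of Phi] finite_W
    by (simp add: tw_mult_apply[OF assms(2)] sum.distrib sum.delta)
qed

lemma Yword_Cons:
  "Yword Phi Pis act x (i # is) = tw_mult W act (Yalpha x (Pis ! i)) (Yword Phi Pis act x is)"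
  by (simp add: Yword_def)

text \<open>Only elements without a shorter word are controlled: for a non-reduced word, lower terms can
  land on word_prod Pis is itself.\<close>
definition Yword_leading_coeff :: "nat list \<Rightarrow> 'q \<Rightarrow> bool" where
  "Yword_leading_coeff is c \<longleftrightarrow>
     (\<forall>y. \<not> word_length_less Pis y (length is) \<longrightarrow>
          Yword Phi Pis act x is y = (if y = word_prod Pis is then c else 0))"

lemma Yword_leading_coeff_Cons:
  assumes "i < length Pis" "\<forall>j\<in>set is. j < length Pis" "Yword_leading_coeff is c"
  shows "Yword_leading_coeff (i # is) (rinv (x (Pis ! i)) * act (reflection (Pis ! i)) c)"
  unfolding Yword_leading_coeff_def
proof (intro allI impI)
  define a where "a = Pis ! i"
  define s where "s = reflection a"
  define w0 where "w0 = word_prod Pis is"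
  have "a \<in> Phi"
    using assms(1) simple_roots_subset by (auto simp: a_def)
  then have a: "a \<in> Phi" "a \<noteq> 0"
    using zero_notin_roots by auto
  have lead: "\<And>y. \<not> word_length_less Pis y (length is) \<Longrightarrow>
      Yword Phi Pis act x is y = (if y = w0 then c else 0)"
    using assms(3) by (simp add: Yword_leading_coeff_def w0_def)
  have sw0: "word_prod Pis (i # is) = s \<circ> w0"
    by (simp add: word_prod_Cons a_def s_def w0_def)
  have sW: "s \<in> W"
    using reflection_in_weyl_group[OF a(1)] by (simp add: s_def)
  fix y
  assume long: "\<not> word_length_less Pis y (length (i # is))"
  show "Yword Phi Pis act x (i # is) y
          = (if y = word_prod Pis (i # is) then rinv (x (Pis ! i)) * act (reflection (Pis ! i)) c else 0)"
  proof (cases "y \<in> W")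
    case False
    have "w0 \<in> W"
      using word_prod_in_weyl_group[OF simple_roots_subset assms(2)] by (simp add: w0_def)
    then have "y \<noteq> s \<circ> w0"
      using False weyl_group_comp[OF sW] by auto
    then show ?thesis
      using False sw0 by (simp add: Yword_Cons tw_mult_def)
  next
    case True
    have "word_length_less Pis w0 (Suc (length is))"
      using assms(2) unfolding word_length_less_def w0_def by auto
    then have "Yword Phi Pis act x is y = 0"
      using long lead by (auto simp: word_length_less_def)
    moreover have "\<not> word_length_less Pis (s \<circ> y) (length is)"
      using long word_length_less_reflection assms(1) a(2) by (auto simp: a_def s_def)
    moreover have "s \<circ> y = w0 \<longleftrightarrow> y = s \<circ> w0"
      unfolding s_def fun_eq_iff comp_apply using reflection_reflection[OF a(2)] by metis
    ultimately show ?thesis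
      using True lead sW sw0
      by (simp add: Yword_Cons tw_mult_Yalpha_apply[OF a(1)] act_zero a_def[symmetric] s_def)
  qed
qed

lemma Yword_leading_coeff_exists:
  "\<forall>i\<in>set is. i < length Pis \<Longrightarrow> \<exists>c. c dvd 1 \<and> Yword_leading_coeff is c"
proof (induction "is")
  case Nil
  show ?case
    by (intro exI[of _ 1])
      (simp add: Yword_leading_coeff_def Yword_def tw_delta_def word_prod_Nil word_length_less_def id_def)
next
  case (Cons i "is")
  then obtain c where c: "c dvd 1" and lead: "Yword_leading_coeff is c"
    by auto
  have a: "Pis ! i \<in> Phi"
    using Cons.prems simple_roots_subset by auto
  have "rinv (x (Pis ! i)) dvd 1"
    using x_invertible[OF a] by (metis dvdI mult.commute)
  moreover have "act (reflection (Pis ! i)) c dvd 1"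
    using act_unit[OF reflection_in_weyl_group[OF a] c] .
  ultimately have "rinv (x (Pis ! i)) * act (reflection (Pis ! i)) c dvd 1"
    using mult_dvd_mono[of _ 1 _ 1] by simp
  then show ?case
    using Yword_leading_coeff_Cons[OF _ _ lead] Cons.prems by auto
qed

lemma Yword_unitriangular:
  assumes "\<forall>w\<in>W. reduced_word Pis w (I w)"
  shows "unitriangular W (\<lambda>w. length (I w)) (\<lambda>u v. Yword Phi Pis act x (I u) v)"
  unfolding unitriangular_def
proof
  fix u assume "u \<in> W"
  then have red: "reduced_word Pis u (I u)"
    using assms by blast
  then obtain c where "c dvd 1" and lead: "\<And>y. \<not> word_length_less Pis y (length (I u)) \<Longrightarrow>
      Yword Phi Pis act x (I u) y = (if y = u then c else 0)"
    using Yword_leading_coeff_exists[of "I u"] unfolding reduced_word_def Yword_leading_coeff_def by auto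
  moreover have "Yword Phi Pis act x (I u) u = c"
    using lead reduced_word_length_less_iff[OF red] by simp
  moreover have "length (I v) < length (I u)"
    if "v \<in> W" "Yword Phi Pis act x (I u) v \<noteq> 0" "v \<noteq> u" for v
    using that lead[of v] reduced_word_length_less_iff assms by fastforce
  ultimately show "Yword Phi Pis act x (I u) u dvd 1 \<and>
      (\<forall>v\<in>W. Yword Phi Pis act x (I u) v \<noteq> 0 \<longrightarrow> v = u \<or> length (I v) < length (I u))"
    by blast
qed

lemma zeta_dual_pairing:
  assumes "\<forall>w\<in>W. reduced_word Pis w (I w)" "u \<in> W"
  shows "(\<Sum>v\<in>W. Yword Phi Pis act x (I u) v * zeta_dual Phi Pis act x I w v) = (if u = w then 1 else 0)"
  unfolding zeta_dual_def pairing_def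
  using unitriangular_THE_solution[OF finite_W Yword_unitriangular[OF assms(1)] assms(2),
      of "\<lambda>u. if u = w then 1 else 0"]
  by simp

lemma sum_Yword_zeta_dual:
  assumes "\<forall>w\<in>W. reduced_word Pis w (I w)" "y \<in> W" "v \<in> W"
  shows "(\<Sum>w\<in>W. Yword Phi Pis act x (I w) y * zeta_dual Phi Pis act x I w v) = (if v = y then 1 else 0)"
  using unitriangular_left_inverse[OF finite_W Yword_unitriangular[OF assms(1)] _ assms(2,3)]
    zeta_dual_pairing[OF assms(1)] by blast

lemma act_eq_sum_Yword_zeta_dual:
  assumes "\<forall>w\<in>W. reduced_word Pis w (I w)" "v \<in> W"
  shows "act v f = (\<Sum>w\<in>W. tw_apply W act (Yword Phi Pis act x (I w)) f * zeta_dual Phi Pis act x I w v)"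
proof -
  have "(\<Sum>w\<in>W. tw_apply W act (Yword Phi Pis act x (I w)) f * zeta_dual Phi Pis act x I w v)
      = (\<Sum>y\<in>W. act y f * (\<Sum>w\<in>W. Yword Phi Pis act x (I w) y * zeta_dual Phi Pis act x I w v))"
    unfolding tw_apply_def sum_distrib_left sum_distrib_right
    by (subst sum.swap) (simp add: ac_simps)
  also have "\<dots> = (\<Sum>y\<in>W. if y = v then act y f else 0)"
    using sum_Yword_zeta_dual[OF assms(1) _ assms(2)] by (intro sum.cong) auto
  also have "\<dots> = act v f"
    using finite_W assms(2) by simp
  finally show ?thesis ..
qed

end

theorem lemma4p1:
  fixes Phi :: "'v::euclidean_space set" and Pis :: "'v list"
    and S :: "'q::comm_ring_1 set" and act :: "('v \<Rightarrow> 'v) \<Rightarrow> 'q \<Rightarrow> 'q"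
    and x :: "'v \<Rightarrow> 'q" and I :: "('v \<Rightarrow> 'v) \<Rightarrow> nat list"
    and s :: 'q and u :: "'v \<Rightarrow> 'v"
  assumes "setting Phi Pis S act x"
    and "\<forall>w\<in>weyl_group Phi. reduced_word Pis w (I w)"
    and "s \<in> S" and "u \<in> weyl_group Phi"
  shows "charmap (weyl_group Phi) act (act (inv u) s) =
         (\<lambda>v. \<Sum>w\<in>weyl_group Phi. conjY Phi Pis act x I u w s * zeta_dual_u Phi Pis act x I u w v)"
proof
  interpret weyl_setting Phi Pis S act x
    by (rule weyl_setting.intro) (fact assms(1))
  fix v
  show "charmap W act (act (inv u) s) v =
      (\<Sum>w\<in>W. conjY Phi Pis act x I u w s * zeta_dual_u Phi Pis act x I u w v)"
  proof (cases "v \<in> W")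
    case True
    define t where "t = act (inv u) s"
    have inv_u: "inv u \<in> W"
      using inv_in_weyl_group[OF zero_notin_roots assms(4)] .
    have "u \<circ> (inv u \<circ> v) = v"
      using bij_weyl_group[OF zero_notin_roots assms(4)] by (simp add: fun_eq_iff bij_is_surj surj_f_inv_f)
    then have "act v t = act u (act (inv u \<circ> v) t)"
      using act_comp[OF assms(4) weyl_group_comp[OF inv_u True]] by metis
    also have "\<dots> = act u (\<Sum>w\<in>W. tw_apply W act (Yword Phi Pis act x (I w)) t
                                * zeta_dual Phi Pis act x I w (inv u \<circ> v))"
      using act_eq_sum_Yword_zeta_dual[OF assms(2) weyl_group_comp[OF inv_u True]] by simp
    also have "\<dots> = (\<Sum>w\<in>W. conjY Phi Pis act x I u w s * zeta_dual_u Phi Pis act x I u w v)"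
      using True by (simp add: act_sum act_mult assms(4) conjY_def zeta_dual_u_def weyl_dot_def t_def)
    finally show ?thesis
      using True by (simp add: charmap_def t_def)
  qed (simp add: charmap_def zeta_dual_u_def weyl_dot_def)
qed

end
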